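(* Let $(X_t^f)_{t\ge0}$ be the Ornstein–Uhlenbeck process on $\mathbb{R}^d$, $dX_t^f=-X_t^f\,dt+\sqrt2\,dB_t$, with $X_0^f\sim q_0$ where $q_0$ is a probability density with $\mathsf{KL}(q_0\|q_\infty)<\infty$, $q_\infty$ the density of $\mathcal{N}(0,\mathbf{I}_d)$. Let $q_t$ be the density of $X_t^f$. For $0\le a\le b$ define $$H_a^b:=\int_a^b\int_{\mathbb{R}^d}q_u(x)\,\big\|\nabla\log q_u(x)-\nabla\log q_\infty(x)\big\|^2\,dx\,du=\int_a^b\int_{\mathbb{R}^d}q_u(x)\,\|\nabla\log q_u(x)+x\|^2\,dx\,du.$$ Then for all $0<t\le T$, $$H_t^T\le\frac{e^{-2t}}{1-e^{-2t}}\,H_0^t.$$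
   Context: $B_t$ is standard Brownian motion in $\mathbb{R}^d$, independent of $X_0^f$. Equivalently $X_t^f\overset{d}{=}e^{-t}X_0^f+\sqrt{1-e^{-2t}}\,Z$ with $Z\sim\mathcal{N}(0,\mathbf{I})$ independent of $X_0^f$. *)

theory Defs
  imports "HOL-Analysis.Analysis"
begin

definition gauss_dens :: "real \<Rightarrow> 'a::euclidean_space \<Rightarrow> real" where
  "gauss_dens s z = (2 * pi * s) powr (- real DIM('a) / 2) * exp (- (norm z)\<^sup>2 / (2 * s))"

definition q_inf :: "'a::euclidean_space \<Rightarrow> real" where
  "q_inf x = gauss_dens 1 x"

definition KL_finite :: "('a::euclidean_space \<Rightarrow> real) \<Rightarrow> ('a \<Rightarrow> real) \<Rightarrow> bool" where
  "KL_finite p r \<longleftrightarrow> integrable lborel (\<lambda>x. p x * ln (p x / r x))"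

text \<open>Density q_t of the OU process X_t = e^{-t} X_0 + sqrt(1 - e^{-2t}) Z,
X_0 having density q0: for t > 0 the convolution formula, q_0 = q0.\<close>
definition ou_dens :: "('a::euclidean_space \<Rightarrow> real) \<Rightarrow> real \<Rightarrow> 'a \<Rightarrow> real" where
  "ou_dens q0 t x = (if t = 0 then q0 x else
     (\<integral>y. q0 y * gauss_dens (1 - exp (-2 * t)) (x - exp (- t) *\<^sub>R y) \<partial>lborel))"

definition grad :: "('a::euclidean_space \<Rightarrow> real) \<Rightarrow> 'a \<Rightarrow> 'a" where
  "grad f x = (\<Sum>b\<in>Basis. frechet_derivative f (at x) b *\<^sub>R b)"

definition H :: "('a::euclidean_space \<Rightarrow> real) \<Rightarrow> real \<Rightarrow> real \<Rightarrow> ennreal" where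
  "H q0 a b = (\<integral>\<^sup>+ u \<in> {a..b}. (\<integral>\<^sup>+ x. ennreal (ou_dens q0 u x *
      (norm (grad (\<lambda>y. ln (ou_dens q0 u y)) x + x))\<^sup>2) \<partial>lborel) \<partial>lborel)"

end

theory Submission
  imports Defs "HOL-Probability.Probability"
begin

(* For u > 0 the integrand of H is |R_u|^2 / q_u, where R_u = grad q_u + x q_u = q_u grad ln (q_u / q_inf)
   is the score flux.  Let k_r(x, y) be the Gaussian transition kernel of the process.  The
   Chapman-Kolmogorov identity  int q_u(y) k_r(x, y) dy = q_(u+r)(x)  and the same Gaussian computation
   give  int k_r(x, y) R_u(y) dy = e^r R_(u+r)(x).  By Cauchy-Schwarz,
   |R_(u+r)(x)|^2 / q_(u+r)(x) <= e^(-2r) int k_r(x, y) |R_u(y)|^2 / q_u(y) dy,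
   and integrating in x shows that the relative Fisher information J(u) = int |R_u|^2 / q_u satisfies
   J(u + r) <= e^(-2r) J(u).  Hence H_t^T <= J(t) int_t^T e^(-2(u-t)) du <= J(t)/2, while
   H_0^t >= J(t) int_0^t e^(2(t-u)) du = J(t) (e^(2t) - 1)/2. *)

section \<open>Gaussian densities\<close>

lemma gauss_dens_nonneg [simp]: "0 \<le> gauss_dens s z"
  by (simp add: gauss_dens_def)

lemma gauss_dens_pos: "s > 0 \<Longrightarrow> gauss_dens s z > 0"
  by (simp add: gauss_dens_def)

lemma gauss_dens_minus [simp]: "gauss_dens s (- z) = gauss_dens s z"
  by (simp add: gauss_dens_def)

lemma gauss_dens_measurable [measurable]: "gauss_dens s \<in> borel_measurable borel"
  unfolding gauss_dens_def by measurable

lemma gauss_dens_eq_peak: "gauss_dens s (z::'a::euclidean_space) = gauss_dens s (0::'a) * exp (- (norm z)\<^sup>2 / (2 * s))"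
  by (simp add: gauss_dens_def)

lemma gauss_dens_le_peak: "s > 0 \<Longrightarrow> gauss_dens s (z::'a::euclidean_space) \<le> gauss_dens s (0::'a)"
  by (subst gauss_dens_eq_peak) (simp add: mult_left_le)

lemma gauss_dens_eq_prod_normal_density:
  fixes y :: "'a::euclidean_space"
  assumes s: "s > 0"
  shows "gauss_dens s y = (\<Prod>b\<in>Basis. normal_density 0 (sqrt s) (y \<bullet> b))"
proof -
  have norm_sq: "(norm y)\<^sup>2 = (\<Sum>b\<in>Basis. (y \<bullet> b)\<^sup>2)"
    unfolding power2_norm_eq_inner by (subst euclidean_inner) (simp add: power2_eq_square)
  have "1 / sqrt (2 * pi * s) = (2 * pi * s) powr (- (1/2))"
    using s by (simp add: powr_minus_divide powr_half_sqrt)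
  then have const: "(1 / sqrt (2 * pi * s)) ^ DIM('a) = (2 * pi * s) powr (- real DIM('a) / 2)"
    using s by (simp add: powr_realpow[symmetric] powr_powr)
  have "(\<Prod>b\<in>Basis. normal_density 0 (sqrt s) (y \<bullet> b))
      = (\<Prod>b\<in>Basis. 1 / sqrt (2 * pi * s) * exp (- (y \<bullet> b)\<^sup>2 / (2 * s)))"
    using s by (intro prod.cong) (auto simp: normal_density_def)
  also have "\<dots> = (\<Prod>b\<in>(Basis::'a set). 1 / sqrt (2 * pi * s)) * (\<Prod>b\<in>Basis. exp (- (y \<bullet> b)\<^sup>2 / (2 * s)))"
    by (rule prod.distrib)
  also have "\<dots> = (1 / sqrt (2 * pi * s)) ^ DIM('a) * exp (\<Sum>b\<in>Basis. - (y \<bullet> b)\<^sup>2 / (2 * s))"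
    by (simp only: prod_constant exp_sum[OF finite_Basis])
  also have "\<dots> = (1 / sqrt (2 * pi * s)) ^ DIM('a) * exp (- (norm y)\<^sup>2 / (2 * s))"
    by (simp only: sum_divide_distrib[symmetric] sum_negf norm_sq)
  finally show ?thesis
    by (simp add: const gauss_dens_def)
qed

lemma nn_integral_gauss_dens:
  assumes s: "s > 0"
  shows "(\<integral>\<^sup>+ y. ennreal (gauss_dens s (y::'a::euclidean_space)) \<partial>lborel) = 1"
proof -
  have "(\<integral>\<^sup>+ y. ennreal (gauss_dens s (y::'a)) \<partial>lborel)
      = (\<integral>\<^sup>+ y. (\<Prod>b\<in>Basis. ennreal (normal_density 0 (sqrt s) ((y::'a) \<bullet> b))) \<partial>lborel)"
    using s by (intro nn_integral_cong) (simp add: prod_ennreal gauss_dens_eq_prod_normal_density)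
  also have "\<dots> = (\<Prod>b\<in>(Basis::'a set). \<integral>\<^sup>+ x. ennreal (normal_density 0 (sqrt s) x) \<partial>lborel)"
    by (rule nn_integral_lborel_prod) auto
  also have "\<dots> = 1"
    using s by (subst nn_integral_eq_integral) auto
  finally show ?thesis .
qed

lemma integrable_gauss_dens: "s > 0 \<Longrightarrow> integrable lborel (gauss_dens s :: 'a::euclidean_space \<Rightarrow> real)"
  by (rule integrableI_nonneg) (auto simp: nn_integral_gauss_dens)

lemma integral_gauss_dens:
  assumes s: "s > 0"
  shows "(\<integral> y. gauss_dens s (y::'a::euclidean_space) \<partial>lborel) = 1"
  using nn_integral_gauss_dens[OF s, where 'a='a]
  by (subst (asm) nn_integral_eq_integral) (auto simp: integrable_gauss_dens[OF s])

lemma nn_integral_lborel_translate: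
  fixes f :: "'a::euclidean_space \<Rightarrow> ennreal"
  assumes [measurable]: "f \<in> borel_measurable borel"
  shows "(\<integral>\<^sup>+ y. f (y + c) \<partial>lborel) = (\<integral>\<^sup>+ y. f y \<partial>lborel)"
  by (subst (2) lborel_distr_plus[symmetric, of c]) (simp add: nn_integral_distr add.commute)

lemma
  fixes f :: "'a::euclidean_space \<Rightarrow> 'b::{banach, second_countable_topology}"
  assumes [measurable]: "f \<in> borel_measurable borel"
  shows lborel_integral_translate: "(\<integral> y. f (y + c) \<partial>lborel) = (\<integral> y. f y \<partial>lborel)"
    and lborel_integrable_translate_iff: "integrable lborel (\<lambda>y. f (y + c)) \<longleftrightarrow> integrable lborel f"
  by (subst (2) lborel_distr_plus[symmetric, of c]; simp add: integral_distr integrable_distr_eq add.commute)+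

lemma lborel_integral_reflect:
  fixes f :: "'a::euclidean_space \<Rightarrow> 'b::{banach, second_countable_topology}"
  assumes [measurable]: "f \<in> borel_measurable borel"
  shows "(\<integral> y. f (- y) \<partial>lborel) = (\<integral> y. f y \<partial>lborel)"
proof -
  have "distr lborel borel uminus = (lborel :: 'a measure)"
    using lborel_affine[of "-1" "0::'a"] by (simp add: density_1 fun_eq_iff)
  then have "(\<integral> y. f y \<partial>lborel) = (\<integral> y. f y \<partial>distr lborel borel uminus)"
    by simp
  also have "\<dots> = (\<integral> y. f (- y) \<partial>lborel)"
    by (subst integral_distr) auto
  finally show ?thesis ..
qed

lemma mult_exp_neg_le:
  fixes Q s :: real
  assumes "0 < s" "0 \<le> Q"
  shows "Q * exp (- Q / (2 * s)) \<le> 2 * s"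
proof -
  have "Q / (2 * s) \<le> exp (Q / (2 * s))"
    using exp_ge_add_one_self[of "Q / (2 * s)"] by linarith
  then show ?thesis
    using assms by (simp add: exp_minus field_simps)
qed

lemma norm_mult_gauss_dens_le:
  fixes z :: "'a::euclidean_space"
  assumes s: "s > 0"
  shows "norm z * gauss_dens s z \<le> gauss_dens s (0::'a) * (1 + 2 * s)"
proof -
  define e where "e = exp (- (norm z)\<^sup>2 / (2 * s))"
  have "2 * norm z \<le> (norm z)\<^sup>2 + 1"
    using zero_le_power2[of "norm z - 1"] unfolding power2_diff by simp
  then have "norm z \<le> 1 + (norm z)\<^sup>2"
    using norm_ge_zero[of z] by linarith
  then have "norm z * e \<le> e + (norm z)\<^sup>2 * e"
    using mult_right_mono[of "norm z" "1 + (norm z)\<^sup>2" e] by (simp add: e_def distrib_right)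
  also have "\<dots> \<le> 1 + 2 * s"
    using mult_exp_neg_le[OF s, of "(norm z)\<^sup>2"] s unfolding e_def by (intro add_mono) auto
  finally have "gauss_dens s (0::'a) * (norm z * e) \<le> gauss_dens s (0::'a) * (1 + 2 * s)"
    by (rule mult_left_mono) simp
  then show ?thesis
    using gauss_dens_eq_peak[of s z] by (simp add: e_def mult.left_commute)
qed

lemma norm_mult_gauss_dens_le_gauss_dens:
  fixes z :: "'a::euclidean_space"
  assumes s: "s > 0"
  shows "norm z * gauss_dens s z \<le> (gauss_dens s (0::'a) * (1 + 4 * s) / gauss_dens (2 * s) (0::'a)) * gauss_dens (2 * s) z"
proof -
  define e where "e = exp (- (norm z)\<^sup>2 / (2 * (2 * s)))"
  have s2: "2 * s > 0"
    using s by simp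
  have "norm z * e \<le> 1 + 2 * (2 * s)"
  proof -
    have "gauss_dens (2 * s) (0::'a) * (norm z * e) \<le> gauss_dens (2 * s) (0::'a) * (1 + 2 * (2 * s))"
      using norm_mult_gauss_dens_le[OF s2, of z] gauss_dens_eq_peak[of "2 * s" z]
      by (simp add: e_def mult.left_commute)
    then show ?thesis
      using gauss_dens_pos[OF s2, of "0::'a"] by simp
  qed
  have "exp (- (norm z)\<^sup>2 / (2 * s)) = e * e"
    by (simp add: e_def mult_exp_exp)
  then have "norm z * gauss_dens s z = gauss_dens s (0::'a) * (norm z * e) * e"
    by (subst gauss_dens_eq_peak) simp
  also have "\<dots> \<le> gauss_dens s (0::'a) * (1 + 4 * s) * e"
    using \<open>norm z * e \<le> 1 + 2 * (2 * s)\<close> by (intro mult_right_mono mult_left_mono) (auto simp: e_def)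
  also have "\<dots> = (gauss_dens s (0::'a) * (1 + 4 * s) / gauss_dens (2 * s) (0::'a)) * gauss_dens (2 * s) z"
    using gauss_dens_eq_peak[of "2 * s" z] gauss_dens_pos[OF s2, of "0::'a"] by (simp add: e_def)
  finally show ?thesis .
qed

lemma integrable_norm_mult_gauss_dens:
  assumes s: "s > 0"
  shows "integrable lborel (\<lambda>z. norm z * gauss_dens s (z::'a::euclidean_space))"
proof (rule Bochner_Integration.integrable_bound)
  let ?C = "gauss_dens s (0::'a) * (1 + 4 * s) / gauss_dens (2 * s) (0::'a)"
  show "integrable lborel (\<lambda>z. ?C * gauss_dens (2 * s) (z::'a))"
    using s by (intro integrable_mult_right integrable_gauss_dens) simp
  show "AE z in lborel. norm (norm z * gauss_dens s z) \<le> norm (?C * gauss_dens (2 * s) (z::'a))"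
    using norm_mult_gauss_dens_le_gauss_dens[OF s] s
    by (intro AE_I2) (simp add: abs_mult gauss_dens_pos less_imp_le)
qed measurable

lemma integrable_gauss_dens_scaleR:
  assumes s: "s > 0"
  shows "integrable lborel (\<lambda>z. gauss_dens s (z::'a::euclidean_space) *\<^sub>R z)"
  by (rule Bochner_Integration.integrable_bound[OF integrable_norm_mult_gauss_dens[OF s]]) auto

lemma integral_gauss_dens_scaleR:
  assumes s: "s > 0"
  shows "(\<integral> z. gauss_dens s (z::'a::euclidean_space) *\<^sub>R z \<partial>lborel) = 0"
proof -
  have "(\<integral> z. gauss_dens s (z::'a) *\<^sub>R z \<partial>lborel) = (\<integral> z. gauss_dens s (- z) *\<^sub>R (- z) \<partial>lborel)"
    by (rule lborel_integral_reflect[symmetric]) measurable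
  also have "\<dots> = - (\<integral> z. gauss_dens s z *\<^sub>R z \<partial>lborel)"
    by simp
  finally have "2 *\<^sub>R (\<integral> z. gauss_dens s (z::'a) *\<^sub>R z \<partial>lborel) = 0"
    by (metis add.right_inverse scaleR_2)
  then show ?thesis
    by simp
qed

lemma
  assumes s: "s > 0"
  shows integrable_gauss_dens_translate: "integrable lborel (\<lambda>y. gauss_dens s (y - m :: 'a::euclidean_space))"
    and integral_gauss_dens_translate: "(\<integral> y. gauss_dens s (y - m :: 'a) \<partial>lborel) = 1"
    and nn_integral_gauss_dens_translate: "(\<integral>\<^sup>+ y. ennreal (gauss_dens s (y - m :: 'a)) \<partial>lborel) = 1"
  using lborel_integrable_translate_iff[of "gauss_dens s" "- m"] integrable_gauss_dens[OF s]
    lborel_integral_translate[of "gauss_dens s" "- m"] integral_gauss_dens[OF s]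
    nn_integral_lborel_translate[of "\<lambda>y. ennreal (gauss_dens s y)" "- m"] nn_integral_gauss_dens[OF s]
  by simp_all

lemma integrable_norm_mult_gauss_dens_translate:
  assumes s: "s > 0"
  shows "integrable lborel (\<lambda>y. gauss_dens s (y - m) * norm (y - m :: 'a::euclidean_space))"
  using lborel_integrable_translate_iff[of "\<lambda>z. norm z * gauss_dens s z" "- m"]
    integrable_norm_mult_gauss_dens[OF s, where 'a='a]
  by (simp add: mult.commute)

lemma
  assumes s: "s > 0"
  shows integrable_gauss_dens_translate_scaleR:
      "integrable lborel (\<lambda>y. gauss_dens s (y - m :: 'a::euclidean_space) *\<^sub>R y)"
    and integral_gauss_dens_translate_scaleR:
      "(\<integral> y. gauss_dens s (y - m :: 'a) *\<^sub>R y \<partial>lborel) = m"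
proof -
  have centred: "integrable lborel (\<lambda>y. gauss_dens s (y - m :: 'a) *\<^sub>R (y - m))"
      "(\<integral> y. gauss_dens s (y - m :: 'a) *\<^sub>R (y - m) \<partial>lborel) = 0"
    using lborel_integrable_translate_iff[of "\<lambda>z. gauss_dens s z *\<^sub>R z" "- m"]
      lborel_integral_translate[of "\<lambda>z. gauss_dens s z *\<^sub>R z" "- m"]
      integrable_gauss_dens_scaleR[OF s] integral_gauss_dens_scaleR[OF s]
    by simp_all
  have const: "integrable lborel (\<lambda>y. gauss_dens s (y - m :: 'a) *\<^sub>R m)"
    using integrable_gauss_dens_translate[OF s, of m] by simp
  have split: "gauss_dens s (y - m) *\<^sub>R y = gauss_dens s (y - m) *\<^sub>R (y - m) + gauss_dens s (y - m) *\<^sub>R m"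
    for y :: 'a
    by (simp add: algebra_simps)
  show "integrable lborel (\<lambda>y. gauss_dens s (y - m :: 'a) *\<^sub>R y)"
    unfolding split using centred(1) const by (rule Bochner_Integration.integrable_add)
  show "(\<integral> y. gauss_dens s (y - m :: 'a) *\<^sub>R y \<partial>lborel) = m"
    unfolding split using centred const integral_gauss_dens_translate[OF s, of m]
      integrable_gauss_dens_translate[OF s, of m]
    by (simp add: Bochner_Integration.integral_add integral_scaleR_left)
qed

lemma integrable_scaleR_bounded:
  fixes q :: "'b \<Rightarrow> real" and f :: "'b \<Rightarrow> 'c::{banach, second_countable_topology}"
  assumes q: "integrable M q" and f [measurable]: "f \<in> borel_measurable M"
    and bound: "\<And>y. norm (f y) \<le> B"
  shows "integrable M (\<lambda>y. q y *\<^sub>R f y)"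
proof (rule Bochner_Integration.integrable_bound)
  show "integrable M (\<lambda>y. B * norm (q y))"
    using q by auto
  show "(\<lambda>y. q y *\<^sub>R f y) \<in> borel_measurable M"
    using borel_measurable_integrable[OF q] by measurable
  show "AE y in M. norm (q y *\<^sub>R f y) \<le> norm (B * norm (q y))"
    using bound order_trans[OF norm_ge_zero bound]
    by (intro AE_I2) (simp add: abs_mult mult.commute[of B] mult_left_mono)
qed

section \<open>Differentiating Gaussian convolutions\<close>

definition gauss_grad :: "real \<Rightarrow> 'a::euclidean_space \<Rightarrow> 'a" where
  "gauss_grad s z = - (gauss_dens s z / s) *\<^sub>R z"

lemma gauss_grad_measurable [measurable]: "gauss_grad s \<in> borel_measurable borel"
  unfolding gauss_grad_def by measurable

lemma norm_gauss_grad_le: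
  fixes z :: "'a::euclidean_space"
  assumes s: "s > 0"
  shows "norm (gauss_grad s z) \<le> gauss_dens s (0::'a) * (1 + 2 * s) / s"
  using norm_mult_gauss_dens_le[OF s, of z] s
  by (simp add: gauss_grad_def divide_right_mono mult.commute)

lemma abs_second_order_remainder_le:
  fixes f f' f'' :: "real \<Rightarrow> real"
  assumes f': "\<And>t. (f has_real_derivative f' t) (at t)"
    and f'': "\<And>t. (f' has_real_derivative f'' t) (at t)"
    and bound: "\<And>t. 0 < t \<Longrightarrow> t < 1 \<Longrightarrow> \<bar>f'' t\<bar> \<le> M"
  shows "\<bar>f 1 - f 0 - f' 0\<bar> \<le> M"
proof -
  obtain \<xi> where \<xi>: "0 < \<xi>" "\<xi> < 1" "f 1 - f 0 = f' \<xi>"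
    using MVT2[of 0 1 f f'] f' by auto
  obtain \<eta> where \<eta>: "0 < \<eta>" "\<eta> < \<xi>" "f' \<xi> - f' 0 = \<xi> * f'' \<eta>"
    using MVT2[of 0 \<xi> f' f''] f'' \<xi>(1) by auto
  have "\<bar>f 1 - f 0 - f' 0\<bar> = \<xi> * \<bar>f'' \<eta>\<bar>"
    using \<xi> \<eta> by (simp add: abs_mult)
  also have "\<dots> \<le> 1 * M"
    using \<xi> \<eta> bound[of \<eta>] by (intro mult_mono) auto
  finally show ?thesis
    by simp
qed

lemma abs_exp_mult_second_deriv_le:
  fixes Q B c s :: real
  assumes s: "s > 0" and Q: "0 \<le> Q" and c: "0 \<le> c" and B: "B\<^sup>2 \<le> c * Q"
  shows "\<bar>exp (- Q / (2 * s)) * (B\<^sup>2 / s\<^sup>2 - c / s)\<bar> \<le> 3 * c / s"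
proof -
  define e where "e = exp (- Q / (2 * s))"
  have "e * B\<^sup>2 \<le> c * (Q * e)"
    using mult_left_mono[OF B, of e] by (simp add: e_def algebra_simps)
  also have "\<dots> \<le> c * (2 * s)"
    using mult_exp_neg_le[OF s Q] c by (intro mult_left_mono) (auto simp: e_def)
  finally have "e * B\<^sup>2 * s \<le> c * (2 * s) * s"
    using s by (intro mult_right_mono) auto
  then have upper: "e * B\<^sup>2 / s\<^sup>2 \<le> 2 * c / s"
    using s by (simp add: field_simps power2_eq_square)
  have lower: "e * (c / s) \<le> c / s"
    using s Q c by (intro mult_left_le_one_le) (auto simp: e_def)
  have nonneg: "0 \<le> e * (c / s)" "0 \<le> e * B\<^sup>2 / s\<^sup>2" and three: "3 * c / s = 2 * c / s + c / s"
    using s c by (simp_all add: e_def add_divide_distrib[symmetric])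
  have "e * B\<^sup>2 / s\<^sup>2 - e * (c / s) \<le> 3 * c / s" "e * (c / s) - e * B\<^sup>2 / s\<^sup>2 \<le> 3 * c / s"
    using upper lower nonneg three by linarith+
  then have "\<bar>e * B\<^sup>2 / s\<^sup>2 - e * (c / s)\<bar> \<le> 3 * c / s"
    by (simp only: abs_le_iff minus_diff_eq)
  then show ?thesis
    by (simp add: e_def right_diff_distrib)
qed

lemma gauss_dens_taylor_bound:
  fixes z h :: "'a::euclidean_space"
  assumes s: "s > 0"
  shows "\<bar>gauss_dens s (z + h) - gauss_dens s z - gauss_grad s z \<bullet> h\<bar> \<le> 3 * gauss_dens s (0::'a) / s * (norm h)\<^sup>2"
proof -
  define b c where "b = z \<bullet> h" and "c = h \<bullet> h"
  define Q where "Q t = (norm (z + t *\<^sub>R h))\<^sup>2" for t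
  have Q_eq: "Q t = z \<bullet> z + 2 * b * t + c * t\<^sup>2" for t
    unfolding Q_def b_def c_def power2_norm_eq_inner
    by (simp add: inner_add_left inner_add_right inner_commute power2_eq_square algebra_simps)
  define \<phi> where "\<phi> t = exp (- Q t / (2 * s))" for t
  define \<phi>' where "\<phi>' t = - \<phi> t * (b + c * t) / s" for t
  define \<phi>'' where "\<phi>'' t = \<phi> t * ((b + c * t)\<^sup>2 / s\<^sup>2 - c / s)" for t
  have d1: "(\<phi> has_real_derivative \<phi>' t) (at t)" for t
    unfolding \<phi>_def \<phi>'_def Q_eq using s
    by (auto intro!: derivative_eq_intros simp: field_simps power2_eq_square)
  have d2: "(\<phi>' has_real_derivative \<phi>'' t) (at t)" for t
    unfolding \<phi>''_def \<phi>'_def \<phi>_def Q_eq using s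
    by (auto intro!: derivative_eq_intros simp: field_simps power2_eq_square)
  have "\<bar>\<phi>'' t\<bar> \<le> 3 * c / s" for t
  proof -
    have "(b + c * t)\<^sup>2 = ((z + t *\<^sub>R h) \<bullet> h)\<^sup>2"
      by (simp add: b_def c_def inner_add_left mult.commute)
    also have "\<dots> \<le> c * Q t"
      unfolding Q_def c_def power2_norm_eq_inner by (subst mult.commute) (rule Cauchy_Schwarz_ineq)
    finally show ?thesis
      unfolding \<phi>''_def \<phi>_def using s by (intro abs_exp_mult_second_deriv_le) (auto simp: Q_def c_def)
  qed
  then have remainder: "\<bar>\<phi> 1 - \<phi> 0 - \<phi>' 0\<bar> \<le> 3 * c / s"
    by (intro abs_second_order_remainder_le[OF d1 d2])
  have "gauss_dens s (z + h) - gauss_dens s z - gauss_grad s z \<bullet> h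
      = gauss_dens s (0::'a) * (\<phi> 1 - \<phi> 0 - \<phi>' 0)"
    unfolding \<phi>'_def \<phi>_def Q_def gauss_grad_def b_def
    using gauss_dens_eq_peak[of s z] gauss_dens_eq_peak[of s "z + h"] by (simp add: algebra_simps)
  then have "\<bar>gauss_dens s (z + h) - gauss_dens s z - gauss_grad s z \<bullet> h\<bar>
      = gauss_dens s (0::'a) * \<bar>\<phi> 1 - \<phi> 0 - \<phi>' 0\<bar>"
    by (simp add: abs_mult)
  also have "\<dots> \<le> gauss_dens s (0::'a) * (3 * c / s)"
    by (rule mult_left_mono[OF remainder]) simp
  also have "\<dots> = 3 * gauss_dens s (0::'a) / s * (norm h)\<^sup>2"
    by (simp add: c_def power2_norm_eq_inner)
  finally show ?thesis .
qed

lemma has_derivative_at_of_quadratic_remainder: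
  fixes f :: "'a::real_normed_vector \<Rightarrow> 'b::real_normed_vector"
  assumes "bounded_linear f'" and remainder: "\<And>h. norm (f (x + h) - f x - f' h) \<le> K * (norm h)\<^sup>2"
  shows "(f has_derivative f') (at x)"
  unfolding has_derivative_at_alt
proof (intro conjI allI impI assms)
  fix e :: real
  assume e: "e > 0"
  show "\<exists>d>0. \<forall>y. norm (y - x) < d \<longrightarrow> norm (f y - f x - f' (y - x)) \<le> e * norm (y - x)"
  proof (intro exI[of _ "e / (\<bar>K\<bar> + 1)"] conjI allI impI)
    show "e / (\<bar>K\<bar> + 1) > 0"
      using e by simp
    fix y
    assume "norm (y - x) < e / (\<bar>K\<bar> + 1)"
    then have "norm (y - x) * (\<bar>K\<bar> + 1) < e"
      by (simp add: pos_less_divide_eq add_nonneg_pos)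
    then have "norm (y - x) + \<bar>K\<bar> * norm (y - x) < e"
      by (simp add: algebra_simps)
    then have "\<bar>K\<bar> * norm (y - x) \<le> e"
      using norm_ge_zero[of "y - x"] by linarith
    have "K * (norm (y - x))\<^sup>2 \<le> (\<bar>K\<bar> * norm (y - x)) * norm (y - x)"
      by (simp add: power2_eq_square mult_right_mono mult.assoc[symmetric])
    also have "\<dots> \<le> e * norm (y - x)"
      using \<open>\<bar>K\<bar> * norm (y - x) \<le> e\<close> by (rule mult_right_mono) simp
    finally show "norm (f y - f x - f' (y - x)) \<le> e * norm (y - x)"
      using remainder[of "y - x"] by simp
  qed
qed

lemma integrable_mult_gauss_dens:
  fixes q :: "'a::euclidean_space \<Rightarrow> real"
  assumes q: "integrable lborel q" and s: "s > 0"
  shows "integrable lborel (\<lambda>y. q y * gauss_dens s (w - c *\<^sub>R y))"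
proof -
  have "integrable lborel (\<lambda>y. q y *\<^sub>R gauss_dens s (w - c *\<^sub>R y))"
    by (rule integrable_scaleR_bounded[OF q, where B="gauss_dens s (0::'a)"]) (auto simp: gauss_dens_le_peak[OF s])
  then show ?thesis
    by simp
qed

lemma integrable_scaleR_gauss_grad:
  fixes q :: "'a::euclidean_space \<Rightarrow> real"
  assumes q: "integrable lborel q" and s: "s > 0"
  shows "integrable lborel (\<lambda>y. q y *\<^sub>R gauss_grad s (w - c *\<^sub>R y))"
  by (rule integrable_scaleR_bounded[OF q _ norm_gauss_grad_le[OF s]]) simp

lemma has_derivative_gauss_convolution:
  fixes q :: "'a::euclidean_space \<Rightarrow> real"
  assumes q: "integrable lborel q" and s: "s > 0"
  shows "((\<lambda>x. \<integral> y. q y * gauss_dens s (x - c *\<^sub>R y) \<partial>lborel) has_derivative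
          (\<lambda>h. (\<integral> y. q y *\<^sub>R gauss_grad s (x - c *\<^sub>R y) \<partial>lborel) \<bullet> h)) (at x)"
proof (rule has_derivative_at_of_quadratic_remainder[OF bounded_linear_inner_right])
  have [measurable]: "q \<in> borel_measurable borel"
    using borel_measurable_integrable[OF q] by simp
  define K where "K = 3 * gauss_dens s (0::'a) / s"
  note conv = integrable_mult_gauss_dens[OF q s]
  note conv_grad = integrable_scaleR_gauss_grad[OF q s, of x c]
  fix h :: 'a
  have inner_h: "(\<integral> y. q y *\<^sub>R gauss_grad s (x - c *\<^sub>R y) \<partial>lborel) \<bullet> h
      = (\<integral> y. q y * (gauss_grad s (x - c *\<^sub>R y) \<bullet> h) \<partial>lborel)"
    using conv_grad by (subst integral_inner_left[symmetric]) auto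
  let ?r = "\<lambda>y. gauss_dens s ((x - c *\<^sub>R y) + h) - gauss_dens s (x - c *\<^sub>R y) - gauss_grad s (x - c *\<^sub>R y) \<bullet> h"
  have "(\<integral> y. q y * gauss_dens s (x + h - c *\<^sub>R y) \<partial>lborel) - (\<integral> y. q y * gauss_dens s (x - c *\<^sub>R y) \<partial>lborel)
      - (\<integral> y. q y *\<^sub>R gauss_grad s (x - c *\<^sub>R y) \<partial>lborel) \<bullet> h = (\<integral> y. q y * ?r y \<partial>lborel)"
    unfolding inner_h using conv[of "x + h"] conv[of x] integrable_inner_left[OF conv_grad, of h]
    by (simp add: right_diff_distrib algebra_simps)
  also have "norm \<dots> \<le> (\<integral> y. \<bar>q y\<bar> * (K * (norm h)\<^sup>2) \<partial>lborel)"
  proof (rule Bochner_Integration.integral_norm_bound_integral)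
    show "integrable lborel (\<lambda>y. q y * ?r y)"
      using conv[of "x + h"] conv[of x] integrable_inner_left[OF conv_grad, of h]
      by (simp add: right_diff_distrib algebra_simps)
    show "integrable lborel (\<lambda>y. \<bar>q y\<bar> * (K * (norm h)\<^sup>2))"
      using q by simp
    show "norm (q y * ?r y) \<le> \<bar>q y\<bar> * (K * (norm h)\<^sup>2)" for y
      unfolding norm_mult K_def
      using mult_left_mono[OF gauss_dens_taylor_bound[OF s, of "x - c *\<^sub>R y" h], of "\<bar>q y\<bar>"]
      by (simp add: algebra_simps)
  qed
  also have "\<dots> = (K * (\<integral> y. \<bar>q y\<bar> \<partial>lborel)) * (norm h)\<^sup>2"
    by simp
  finally show "norm ((\<integral> y. q y * gauss_dens s (x + h - c *\<^sub>R y) \<partial>lborel) - (\<integral> y. q y * gauss_dens s (x - c *\<^sub>R y) \<partial>lborel)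
      - (\<integral> y. q y *\<^sub>R gauss_grad s (x - c *\<^sub>R y) \<partial>lborel) \<bullet> h) \<le> (K * (\<integral> y. \<bar>q y\<bar> \<partial>lborel)) * (norm h)\<^sup>2" .
qed

section \<open>Products of Gaussian kernels\<close>

lemma gauss_dens_peak_mult:
  assumes "a * b = c * d"
  shows "gauss_dens a (0::'a::euclidean_space) * gauss_dens b (0::'a) = gauss_dens c (0::'a) * gauss_dens d (0::'a)"
proof -
  have "(2 * pi * a) * (2 * pi * b) = (2 * pi * c) * (2 * pi * d)"
    using assms by (simp add: algebra_simps)
  then show ?thesis
    unfolding gauss_dens_def
    by (simp only: norm_zero zero_power2 minus_zero div_0 exp_zero mult_1_right powr_mult[symmetric])
qed

lemma gauss_exponent_complete_square:
  fixes su sr e W P M :: real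
  assumes su: "su > 0" and sr: "sr > 0"
  defines "sv \<equiv> sr + e\<^sup>2 * su"
  defines "\<tau> \<equiv> su * sr / sv" and "\<kappa> \<equiv> e * su / sv"
  shows "- W / (2 * su) - (P - 2 * e * M + e\<^sup>2 * W) / (2 * sr)
       = - P / (2 * sv) - (W - 2 * \<kappa> * M + \<kappa>\<^sup>2 * P) / (2 * \<tau>)"
proof -
  have "sv > 0"
    unfolding sv_def using su sr by (simp add: add_pos_nonneg)
  then show ?thesis
    unfolding \<tau>_def \<kappa>_def using su sr
    by (simp add: field_simps power2_eq_square) (simp add: sv_def algebra_simps power2_eq_square)
qed

text \<open>Bayes' rule for Gaussians: a prior \<open>N(a, su)\<close> for \<open>y\<close> times the likelihood \<open>N(e y, sr)\<close> of \<open>x\<close>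
  is the marginal \<open>N(e a, sv)\<close> of \<open>x\<close> times the posterior \<open>N(a + \<kappa> (x - e a), \<tau>)\<close> of \<open>y\<close>.\<close>

lemma gauss_dens_prior_mult_likelihood:
  fixes a x y :: "'a::euclidean_space" and su sr e :: real
  assumes su: "su > 0" and sr: "sr > 0"
  defines "sv \<equiv> sr + e\<^sup>2 * su"
  defines "\<tau> \<equiv> su * sr / sv" and "\<kappa> \<equiv> e * su / sv"
  shows "gauss_dens su (y - a) * gauss_dens sr (x - e *\<^sub>R y)
       = gauss_dens sv (x - e *\<^sub>R a) * gauss_dens \<tau> (y - (a + \<kappa> *\<^sub>R (x - e *\<^sub>R a)))"
proof -
  have sv: "sv > 0"
    unfolding sv_def using su sr by (simp add: add_pos_nonneg)
  have \<tau>: "\<tau> > 0"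
    unfolding \<tau>_def using su sr sv by simp
  define w p where "w = y - a" and "p = x - e *\<^sub>R a"
  have x_minus: "x - e *\<^sub>R y = p - e *\<^sub>R w" and y_minus: "y - (a + \<kappa> *\<^sub>R p) = w - \<kappa> *\<^sub>R p"
    unfolding w_def p_def by (simp_all add: algebra_simps)
  have "(norm (p - e *\<^sub>R w))\<^sup>2 = p \<bullet> p - 2 * e * (w \<bullet> p) + e\<^sup>2 * (w \<bullet> w)"
      "(norm (w - \<kappa> *\<^sub>R p))\<^sup>2 = w \<bullet> w - 2 * \<kappa> * (w \<bullet> p) + \<kappa>\<^sup>2 * (p \<bullet> p)"
    unfolding power2_norm_eq_inner
    by (simp_all add: inner_diff_left inner_diff_right inner_commute power2_eq_square algebra_simps)
  then have exponent: "- (norm w)\<^sup>2 / (2 * su) - (norm (p - e *\<^sub>R w))\<^sup>2 / (2 * sr)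
      = - (norm p)\<^sup>2 / (2 * sv) - (norm (w - \<kappa> *\<^sub>R p))\<^sup>2 / (2 * \<tau>)"
    unfolding power2_norm_eq_inner[of w] power2_norm_eq_inner[of p] sv_def \<tau>_def \<kappa>_def
    by (simp only: gauss_exponent_complete_square[OF su sr])
  have "su * sr = sv * \<tau>"
    unfolding \<tau>_def using sv by simp
  then have peak: "gauss_dens su (0::'a) * gauss_dens sr (0::'a) = gauss_dens sv (0::'a) * gauss_dens \<tau> (0::'a)"
    by (rule gauss_dens_peak_mult)
  have "gauss_dens su (y - a) * gauss_dens sr (x - e *\<^sub>R y) = gauss_dens su w * gauss_dens sr (p - e *\<^sub>R w)"
    by (simp only: w_def[symmetric] x_minus)
  also have "\<dots> = gauss_dens su (0::'a) * gauss_dens sr (0::'a) * exp (- (norm w)\<^sup>2 / (2 * su) - (norm (p - e *\<^sub>R w))\<^sup>2 / (2 * sr))"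
    unfolding gauss_dens_eq_peak[of su w] gauss_dens_eq_peak[of sr "p - e *\<^sub>R w"]
    by (simp add: exp_diff exp_minus field_simps)
  also have "\<dots> = gauss_dens sv (0::'a) * gauss_dens \<tau> (0::'a) * exp (- (norm p)\<^sup>2 / (2 * sv) - (norm (w - \<kappa> *\<^sub>R p))\<^sup>2 / (2 * \<tau>))"
    unfolding peak exponent ..
  also have "\<dots> = gauss_dens sv p * gauss_dens \<tau> (w - \<kappa> *\<^sub>R p)"
    unfolding gauss_dens_eq_peak[of sv p] gauss_dens_eq_peak[of \<tau> "w - \<kappa> *\<^sub>R p"]
    by (simp add: exp_diff exp_minus field_simps)
  also have "\<dots> = gauss_dens sv (x - e *\<^sub>R a) * gauss_dens \<tau> (y - (a + \<kappa> *\<^sub>R (x - e *\<^sub>R a)))"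
    by (simp only: p_def[symmetric] y_minus)
  finally show ?thesis .
qed

section \<open>The Ornstein--Uhlenbeck densities\<close>

definition ou_var :: "real \<Rightarrow> real" where
  "ou_var u = 1 - exp (-2 * u)"

lemma ou_var_pos: "u > 0 \<Longrightarrow> ou_var u > 0"
  by (simp add: ou_var_def)

lemma ou_var_add: "ou_var (u + r) = ou_var r + (exp (- r))\<^sup>2 * ou_var u"
  unfolding ou_var_def by (simp add: power2_eq_square mult_exp_exp algebra_simps)

text \<open>Transition density of the Ornstein--Uhlenbeck process from \<open>y\<close> to \<open>x\<close> in time \<open>r\<close>.\<close>

definition ou_kernel :: "real \<Rightarrow> 'a::euclidean_space \<Rightarrow> 'a \<Rightarrow> real" where
  "ou_kernel r x y = gauss_dens (ou_var r) (x - exp (- r) *\<^sub>R y)"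

lemma ou_kernel_nonneg [simp]: "0 \<le> ou_kernel r x y"
  by (simp add: ou_kernel_def)

lemma ou_kernel_pos: "r > 0 \<Longrightarrow> ou_kernel r x y > 0"
  by (simp add: ou_kernel_def gauss_dens_pos ou_var_pos)

lemma ou_kernel_measurable [measurable]: "(\<lambda>(x, y). ou_kernel r x y) \<in> borel_measurable (lborel \<Otimes>\<^sub>M lborel)"
  unfolding ou_kernel_def by measurable

locale ou_density =
  fixes q0 :: "'a::euclidean_space \<Rightarrow> real"
  assumes measurable_q0 [measurable]: "q0 \<in> borel_measurable borel"
    and q0_nonneg: "\<And>x. 0 \<le> q0 x"
    and nn_integral_q0: "(\<integral>\<^sup>+ x. ennreal (q0 x) \<partial>lborel) = 1"
begin

abbreviation q :: "real \<Rightarrow> 'a \<Rightarrow> real" where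
  "q \<equiv> ou_dens q0"

lemma integrable_q0: "integrable lborel q0"
  by (rule integrableI_nonneg) (auto simp: nn_integral_q0 q0_nonneg)

lemma integral_q0: "(\<integral> x. q0 x \<partial>lborel) = 1"
  using nn_integral_q0 by (subst (asm) nn_integral_eq_integral) (auto simp: integrable_q0 q0_nonneg)

lemma ou_dens_eq: "u > 0 \<Longrightarrow> q u x = (\<integral> y. q0 y * ou_kernel u x y \<partial>lborel)"
  by (simp add: ou_dens_def ou_var_def ou_kernel_def)

lemma ou_dens_measurable [measurable]: "q u \<in> borel_measurable borel"
  unfolding ou_dens_def by (cases "u = 0") simp_all

lemma integrable_q0_mult_ou_kernel: "u > 0 \<Longrightarrow> integrable lborel (\<lambda>y. q0 y * ou_kernel u x y)"
  unfolding ou_kernel_def by (rule integrable_mult_gauss_dens[OF integrable_q0 ou_var_pos])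

lemma nn_integral_ou_dens:
  assumes u: "u > 0"
  shows "ennreal (q u x) = (\<integral>\<^sup>+ y. ennreal (q0 y * ou_kernel u x y) \<partial>lborel)"
  unfolding ou_dens_eq[OF u]
  by (subst nn_integral_eq_integral)
     (auto intro!: integrable_q0_mult_ou_kernel u AE_I2 mult_nonneg_nonneg q0_nonneg)

lemma ou_dens_pos:
  assumes u: "u > 0"
  shows "q u x > 0"
proof -
  let ?f = "\<lambda>y. q0 y * ou_kernel u x y"
  have "(\<integral> y. ?f y \<partial>lborel) \<noteq> 0"
  proof
    assume "(\<integral> y. ?f y \<partial>lborel) = 0"
    then have "AE y in lborel. ?f y = 0"
      using integrable_q0_mult_ou_kernel[OF u] by (subst (asm) integral_nonneg_eq_0_iff_AE) (auto simp: q0_nonneg)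
    then have "AE y in lborel. q0 y = 0"
    proof eventually_elim
      case (elim y)
      then show ?case
        using ou_kernel_pos[OF u, of x y] by simp
    qed
    then have "(\<integral> y. q0 y \<partial>lborel) = 0"
      by (simp add: integral_eq_zero_AE)
    then show False
      using integral_q0 by simp
  qed
  moreover have "0 \<le> (\<integral> y. ?f y \<partial>lborel)"
    by (intro integral_nonneg_AE AE_I2 mult_nonneg_nonneg q0_nonneg ou_kernel_nonneg)
  ultimately show ?thesis
    using ou_dens_eq[OF u] by simp
qed

definition ou_dens_grad :: "real \<Rightarrow> 'a \<Rightarrow> 'a" where
  "ou_dens_grad u x = (\<integral> y. q0 y *\<^sub>R gauss_grad (ou_var u) (x - exp (- u) *\<^sub>R y) \<partial>lborel)"

lemma ou_dens_grad_measurable [measurable]: "ou_dens_grad u \<in> borel_measurable borel"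
  unfolding ou_dens_grad_def by measurable

lemma has_derivative_ou_dens:
  assumes u: "u > 0"
  shows "(q u has_derivative (\<lambda>h. ou_dens_grad u x \<bullet> h)) (at x)"
  using has_derivative_gauss_convolution[OF integrable_q0 ou_var_pos[OF u], of "exp (- u)" x]
  unfolding ou_dens_grad_def ou_dens_eq[OF u, abs_def] ou_kernel_def .

lemma grad_ln_ou_dens:
  assumes u: "u > 0"
  shows "grad (\<lambda>y. ln (q u y)) x = (1 / q u x) *\<^sub>R ou_dens_grad u x"
proof -
  have "((\<lambda>y. ln (q u y)) has_derivative (\<lambda>h. (ou_dens_grad u x \<bullet> h) * inverse (q u x))) (at x)"
    by (rule DERIV_compose_FDERIV[OF DERIV_ln[OF ou_dens_pos[OF u]] has_derivative_ou_dens[OF u]])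
  then have "grad (\<lambda>y. ln (q u y)) x = (\<Sum>b\<in>Basis. ((ou_dens_grad u x \<bullet> b) * inverse (q u x)) *\<^sub>R b)"
    unfolding grad_def by (simp add: frechet_derivative_at[symmetric])
  also have "\<dots> = (1 / q u x) *\<^sub>R (\<Sum>b\<in>Basis. (ou_dens_grad u x \<bullet> b) *\<^sub>R b)"
    by (simp add: scaleR_sum_right field_simps)
  also have "\<dots> = (1 / q u x) *\<^sub>R ou_dens_grad u x"
    by (simp add: euclidean_representation)
  finally show ?thesis .
qed

text \<open>\<open>score_flux u = q u (\<nabla> ln q u + x) = q u \<nabla> ln (q u / q_inf)\<close>.\<close>

definition score_flux :: "real \<Rightarrow> 'a \<Rightarrow> 'a" where
  "score_flux u x = ou_dens_grad u x + q u x *\<^sub>R x"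

lemma score_flux_measurable [measurable]: "score_flux u \<in> borel_measurable borel"
  unfolding score_flux_def by measurable

lemma fisher_integrand_eq:
  assumes u: "u > 0"
  shows "q u x * (norm (grad (\<lambda>y. ln (q u y)) x + x))\<^sup>2 = (norm (score_flux u x))\<^sup>2 / q u x"
proof -
  have pos: "q u x > 0"
    using ou_dens_pos[OF u] .
  then have "grad (\<lambda>y. ln (q u y)) x + x = (1 / q u x) *\<^sub>R score_flux u x"
    unfolding grad_ln_ou_dens[OF u] score_flux_def by (simp add: scaleR_add_right)
  then show ?thesis
    using pos by (simp add: power2_eq_square field_simps)
qed

definition score_flux_kernel :: "real \<Rightarrow> 'a \<Rightarrow> 'a \<Rightarrow> 'a" where
  "score_flux_kernel u x y = q0 y *\<^sub>R (ou_kernel u x y *\<^sub>R (x - (1 / ou_var u) *\<^sub>R (x - exp (- u) *\<^sub>R y)))"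

lemma score_flux_kernel_measurable [measurable]:
  "(\<lambda>(x, y). score_flux_kernel u x y) \<in> borel_measurable (lborel \<Otimes>\<^sub>M lborel)"
  unfolding score_flux_kernel_def by measurable

lemma score_flux_eq_integral:
  assumes u: "u > 0"
  shows "score_flux u x = (\<integral> y. score_flux_kernel u x y \<partial>lborel)"
proof -
  have s: "ou_var u > 0"
    using ou_var_pos[OF u] .
  have grad_part: "integrable lborel (\<lambda>y. q0 y *\<^sub>R gauss_grad (ou_var u) (x - exp (- u) *\<^sub>R y))"
    by (rule integrable_scaleR_gauss_grad[OF integrable_q0 s])
  have dens_part: "integrable lborel (\<lambda>y. (q0 y * ou_kernel u x y) *\<^sub>R x)"
    using integrable_q0_mult_ou_kernel[OF u] by simp
  have "score_flux u x = (\<integral> y. q0 y *\<^sub>R gauss_grad (ou_var u) (x - exp (- u) *\<^sub>R y)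
      + (q0 y * ou_kernel u x y) *\<^sub>R x \<partial>lborel)"
    unfolding score_flux_def ou_dens_grad_def ou_dens_eq[OF u]
    using grad_part dens_part integrable_q0_mult_ou_kernel[OF u] by simp
  also have "\<dots> = (\<integral> y. score_flux_kernel u x y \<partial>lborel)"
    unfolding score_flux_kernel_def gauss_grad_def ou_kernel_def using s
    by (intro Bochner_Integration.integral_cong refl) (simp add: algebra_simps divide_inverse)
  finally show ?thesis .
qed

end

section \<open>The Chapman--Kolmogorov identity\<close>

lemma ou_kernel_mult_ou_kernel:
  fixes x y z :: "'a::euclidean_space"
  assumes u: "u > 0" and r: "r > 0"
  defines "\<tau> \<equiv> ou_var u * ou_var r / ou_var (u + r)" and "\<kappa> \<equiv> exp (- r) * ou_var u / ou_var (u + r)"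
  shows "ou_kernel u y z * ou_kernel r x y
       = ou_kernel (u + r) x z * gauss_dens \<tau> (y - (exp (- u) *\<^sub>R z + \<kappa> *\<^sub>R (x - exp (- (u + r)) *\<^sub>R z)))"
proof -
  have "exp (- r) * exp (- u) = exp (- u - r)"
    using exp_add[of "- u" "- r"] by (simp add: mult.commute)
  then show ?thesis
    using gauss_dens_prior_mult_likelihood[OF ou_var_pos[OF u] ou_var_pos[OF r], of y "exp (- u) *\<^sub>R z" x "exp (- r)"]
    unfolding ou_kernel_def \<tau>_def \<kappa>_def ou_var_add[symmetric] by simp
qed

lemma nn_integral_ou_kernel_mult_ou_kernel:
  assumes u: "u > 0" and r: "r > 0"
  shows "(\<integral>\<^sup>+ y. ennreal (ou_kernel u y z) * ennreal (ou_kernel r x y) \<partial>lborel) = ennreal (ou_kernel (u + r) x z)"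
proof -
  define \<tau> where "\<tau> = ou_var u * ou_var r / ou_var (u + r)"
  define \<mu> where "\<mu> = exp (- u) *\<^sub>R z + (exp (- r) * ou_var u / ou_var (u + r)) *\<^sub>R (x - exp (- (u + r)) *\<^sub>R z)"
  have \<tau>: "\<tau> > 0"
    unfolding \<tau>_def using ou_var_pos u r by simp
  have "(\<integral>\<^sup>+ y. ennreal (ou_kernel u y z) * ennreal (ou_kernel r x y) \<partial>lborel)
      = (\<integral>\<^sup>+ y. ennreal (ou_kernel (u + r) x z) * ennreal (gauss_dens \<tau> (y - \<mu>)) \<partial>lborel)"
    unfolding ennreal_mult'[symmetric, OF ou_kernel_nonneg] ou_kernel_mult_ou_kernel[OF u r] \<tau>_def \<mu>_def
    by (simp add: ennreal_mult)
  also have "\<dots> = ennreal (ou_kernel (u + r) x z)"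
    by (simp add: nn_integral_cmult nn_integral_gauss_dens_translate[OF \<tau>])
  finally show ?thesis .
qed

lemma ou_kernel_mult_norm_le:
  fixes x y :: "'a::euclidean_space"
  assumes r: "r > 0"
  shows "ou_kernel r x y * norm y \<le> exp r * gauss_dens (ou_var r) (0::'a) * (norm x + 1 + 2 * ou_var r)"
proof -
  define w where "w = x - exp (- r) *\<^sub>R y"
  have s: "ou_var r > 0"
    using ou_var_pos[OF r] .
  have "norm y = exp r * norm (x - w)"
    by (simp add: w_def exp_minus)
  also have "\<dots> \<le> exp r * (norm x + norm w)"
    by (simp add: norm_triangle_ineq4)
  finally have "ou_kernel r x y * norm y \<le> gauss_dens (ou_var r) w * (exp r * (norm x + norm w))"
    unfolding ou_kernel_def w_def[symmetric] by (rule mult_left_mono) simp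
  also have "\<dots> = exp r * (gauss_dens (ou_var r) w * norm x + norm w * gauss_dens (ou_var r) w)"
    by (simp add: algebra_simps)
  also have "\<dots> \<le> exp r * (gauss_dens (ou_var r) (0::'a) * norm x + gauss_dens (ou_var r) (0::'a) * (1 + 2 * ou_var r))"
    using gauss_dens_le_peak[OF s, of w] norm_mult_gauss_dens_le[OF s, of w]
    by (intro mult_left_mono add_mono mult_right_mono) auto
  finally show ?thesis
    by (simp add: algebra_simps)
qed

lemma ou_var_posterior_coeffs:
  assumes u: "u > 0" and r: "r > 0"
  defines "e \<equiv> exp (- r)"
  defines "\<kappa> \<equiv> e * ou_var u / ou_var (u + r)"
  shows "e * (1 - 1 / ou_var u) * \<kappa> = 1 - 1 / ou_var (u + r)"
    and "e * (1 - 1 / ou_var u) * (1 - e * \<kappa>) + e / ou_var u = e / ou_var (u + r)"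
proof -
  have su: "ou_var u > 0" and sv: "ou_var (u + r) > 0"
    using ou_var_pos u r by simp_all
  have svr: "ou_var (u + r) = (1 - e\<^sup>2) + e\<^sup>2 * ou_var u"
    unfolding e_def ou_var_add by (simp add: ou_var_def power2_eq_square mult_exp_exp)
  have "e * (1 - 1 / ou_var u) * \<kappa> = e\<^sup>2 * (ou_var u - 1) / ou_var (u + r)"
    unfolding \<kappa>_def using su sv by (simp add: field_simps power2_eq_square)
  also have "e\<^sup>2 * (ou_var u - 1) = ou_var (u + r) - 1"
    unfolding svr by (simp add: algebra_simps)
  finally show "e * (1 - 1 / ou_var u) * \<kappa> = 1 - 1 / ou_var (u + r)"
    using sv by (simp add: field_simps)
  have "1 - e * \<kappa> = (ou_var (u + r) - e\<^sup>2 * ou_var u) / ou_var (u + r)"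
    unfolding \<kappa>_def using sv by (simp add: field_simps power2_eq_square)
  also have "ou_var (u + r) - e\<^sup>2 * ou_var u = 1 - e\<^sup>2"
    unfolding svr by simp
  finally have k: "1 - e * \<kappa> = (1 - e\<^sup>2) / ou_var (u + r)" .
  have "e * (1 - 1 / ou_var u) * (1 - e * \<kappa>) + e / ou_var u
      = e * ((ou_var u - 1) * (1 - e\<^sup>2) + ou_var (u + r)) / (ou_var u * ou_var (u + r))"
    unfolding k using su sv by (simp add: field_simps)
  also have "(ou_var u - 1) * (1 - e\<^sup>2) + ou_var (u + r) = ou_var u"
    unfolding svr by (simp add: algebra_simps)
  finally show "e * (1 - 1 / ou_var u) * (1 - e * \<kappa>) + e / ou_var u = e / ou_var (u + r)"
    using su by simp
qed

lemma ou_kernel_posterior_mean: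
  fixes x a p :: "'a::euclidean_space"
  assumes u: "u > 0" and r: "r > 0"
  defines "\<kappa> \<equiv> exp (- r) * ou_var u / ou_var (u + r)"
  assumes p: "p = x - exp (- r) *\<^sub>R a"
  shows "(1 - 1 / ou_var u) *\<^sub>R (a + \<kappa> *\<^sub>R p) + (1 / ou_var u) *\<^sub>R a = exp r *\<^sub>R (x - (1 / ou_var (u + r)) *\<^sub>R p)"
proof -
  have "exp (- r) *\<^sub>R ((1 - 1 / ou_var u) *\<^sub>R (a + \<kappa> *\<^sub>R p) + (1 / ou_var u) *\<^sub>R a)
      = (exp (- r) * (1 - 1 / ou_var u) * \<kappa>) *\<^sub>R x
        + (exp (- r) * (1 - 1 / ou_var u) * (1 - exp (- r) * \<kappa>) + exp (- r) / ou_var u) *\<^sub>R a"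
    unfolding p by (simp add: algebra_simps)
  also have "\<dots> = (1 - 1 / ou_var (u + r)) *\<^sub>R x + (exp (- r) / ou_var (u + r)) *\<^sub>R a"
    unfolding \<kappa>_def ou_var_posterior_coeffs[OF u r] ..
  also have "\<dots> = x - (1 / ou_var (u + r)) *\<^sub>R p"
    unfolding p by (simp add: algebra_simps)
  finally have "exp r *\<^sub>R exp (- r) *\<^sub>R ((1 - 1 / ou_var u) *\<^sub>R (a + \<kappa> *\<^sub>R p) + (1 / ou_var u) *\<^sub>R a)
      = exp r *\<^sub>R (x - (1 / ou_var (u + r)) *\<^sub>R p)"
    by simp
  then show ?thesis
    by (simp add: exp_minus)
qed

lemma nn_integral_ou_kernel_mult_affine_norm:
  fixes z :: "'a::euclidean_space"
  assumes u: "u > 0" and "0 \<le> B1" "0 \<le> B2"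
  shows "(\<integral>\<^sup>+ y. ennreal (ou_kernel u y z * (B1 + B2 * norm (y - exp (- u) *\<^sub>R z))) \<partial>lborel)
    = ennreal (B1 + B2 * (\<integral> w. gauss_dens (ou_var u) w * norm (w::'a) \<partial>lborel))"
proof -
  let ?m = "exp (- u) *\<^sub>R z"
  have s: "ou_var u > 0"
    using ou_var_pos[OF u] .
  have "(\<integral> y. gauss_dens (ou_var u) (y - ?m) * norm (y - ?m) \<partial>lborel) = (\<integral> w. gauss_dens (ou_var u) w * norm (w::'a) \<partial>lborel)"
    using lborel_integral_translate[of "\<lambda>w. gauss_dens (ou_var u) w * norm w" "- ?m"] by simp
  then show ?thesis
    using integrable_norm_mult_gauss_dens_translate[OF s, of ?m] integrable_gauss_dens_translate[OF s, of ?m]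
      integral_gauss_dens_translate[OF s, of ?m] assms(2,3)
    unfolding ou_kernel_def
    by (subst nn_integral_eq_integral) (auto intro!: AE_I2 mult_nonneg_nonneg add_nonneg_nonneg simp: algebra_simps)
qed

context ou_density
begin

lemma nn_integral_ou_dens_mult_ou_kernel:
  assumes u: "u > 0" and r: "r > 0"
  shows "(\<integral>\<^sup>+ y. ennreal (q u y * ou_kernel r x y) \<partial>lborel) = ennreal (q (u + r) x)"
proof -
  have "(\<integral>\<^sup>+ y. ennreal (q u y * ou_kernel r x y) \<partial>lborel)
      = (\<integral>\<^sup>+ y. (\<integral>\<^sup>+ z. ennreal (q0 z * (ou_kernel u y z * ou_kernel r x y)) \<partial>lborel) \<partial>lborel)"
    using ou_dens_pos[OF u] q0_nonneg
    by (simp add: ennreal_mult nn_integral_ou_dens[OF u] nn_integral_multc[symmetric] mult.assoc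
        less_imp_le)
  also have "\<dots> = (\<integral>\<^sup>+ z. (\<integral>\<^sup>+ y. ennreal (q0 z * (ou_kernel u y z * ou_kernel r x y)) \<partial>lborel) \<partial>lborel)"
    by (rule lborel_pair.Fubini') measurable
  also have "\<dots> = (\<integral>\<^sup>+ z. ennreal (q0 z * ou_kernel (u + r) x z) \<partial>lborel)"
    using q0_nonneg
    by (simp add: ennreal_mult nn_integral_cmult nn_integral_ou_kernel_mult_ou_kernel[OF u r])
  also have "\<dots> = ennreal (q (u + r) x)"
    using nn_integral_ou_dens[of "u + r" x] u r by simp
  finally show ?thesis .
qed

lemma integral_ou_kernel_scaleR_score_flux_kernel:
  assumes u: "u > 0" and r: "r > 0"
  shows "(\<integral> y. ou_kernel r x y *\<^sub>R score_flux_kernel u y z \<partial>lborel) = exp r *\<^sub>R score_flux_kernel (u + r) x z"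
proof -
  define \<tau> where "\<tau> = ou_var u * ou_var r / ou_var (u + r)"
  define \<kappa> where "\<kappa> = exp (- r) * ou_var u / ou_var (u + r)"
  define a where "a = exp (- u) *\<^sub>R z"
  define p where "p = x - exp (- (u + r)) *\<^sub>R z"
  define \<mu> where "\<mu> = a + \<kappa> *\<^sub>R p"
  define c where "c = q0 z * ou_kernel (u + r) x z"
  have \<tau>: "\<tau> > 0"
    unfolding \<tau>_def using ou_var_pos u r by simp
  have "ou_kernel r x y *\<^sub>R score_flux_kernel u y z
      = c *\<^sub>R ((1 - 1 / ou_var u) *\<^sub>R (gauss_dens \<tau> (y - \<mu>) *\<^sub>R y) + gauss_dens \<tau> (y - \<mu>) *\<^sub>R ((1 / ou_var u) *\<^sub>R a))"
    for y
  proof -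
    have "ou_kernel u y z * ou_kernel r x y = ou_kernel (u + r) x z * gauss_dens \<tau> (y - \<mu>)"
      unfolding ou_kernel_mult_ou_kernel[OF u r] \<tau>_def \<mu>_def \<kappa>_def a_def p_def ..
    then show ?thesis
      unfolding score_flux_kernel_def c_def a_def by (simp add: algebra_simps)
  qed
  then have "(\<integral> y. ou_kernel r x y *\<^sub>R score_flux_kernel u y z \<partial>lborel)
      = c *\<^sub>R (\<integral> y. (1 - 1 / ou_var u) *\<^sub>R (gauss_dens \<tau> (y - \<mu>) *\<^sub>R y)
          + gauss_dens \<tau> (y - \<mu>) *\<^sub>R ((1 / ou_var u) *\<^sub>R a) \<partial>lborel)"
    by simp
  also have "\<dots> = c *\<^sub>R ((1 - 1 / ou_var u) *\<^sub>R (\<integral> y. gauss_dens \<tau> (y - \<mu>) *\<^sub>R y \<partial>lborel)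
          + (\<integral> y. gauss_dens \<tau> (y - \<mu>) \<partial>lborel) *\<^sub>R ((1 / ou_var u) *\<^sub>R a))"
  proof -
    have "integrable lborel (\<lambda>y. (1 - 1 / ou_var u) *\<^sub>R (gauss_dens \<tau> (y - \<mu>) *\<^sub>R y))"
      using integrable_gauss_dens_translate_scaleR[OF \<tau>] by (rule integrable_scaleR_right)
    moreover have "integrable lborel (\<lambda>y. gauss_dens \<tau> (y - \<mu>) *\<^sub>R ((1 / ou_var u) *\<^sub>R a))"
      using integrable_gauss_dens_translate[OF \<tau>] by (rule integrable_scaleR_left)
    ultimately show ?thesis
      by (simp only: Bochner_Integration.integral_add integral_scaleR_right integral_scaleR_left
          integrable_gauss_dens_translate[OF \<tau>])
  qed
  also have "\<dots> = c *\<^sub>R ((1 - 1 / ou_var u) *\<^sub>R \<mu> + (1 / ou_var u) *\<^sub>R a)"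
    by (simp add: integral_gauss_dens_translate_scaleR[OF \<tau>] integral_gauss_dens_translate[OF \<tau>])
  also have "(1 - 1 / ou_var u) *\<^sub>R \<mu> + (1 / ou_var u) *\<^sub>R a = exp r *\<^sub>R (x - (1 / ou_var (u + r)) *\<^sub>R p)"
    unfolding \<mu>_def \<kappa>_def
    by (rule ou_kernel_posterior_mean[OF u r]) (simp add: p_def a_def mult_exp_exp add.commute)
  finally show ?thesis
    unfolding score_flux_kernel_def c_def p_def ou_kernel_def by (simp add: algebra_simps)
qed

lemma norm_ou_kernel_scaleR_score_flux_kernel_le:
  assumes u: "u > 0" and r: "r > 0"
  shows "norm (ou_kernel r x y *\<^sub>R score_flux_kernel u y z)
    \<le> q0 z * (ou_kernel u y z * (exp r * gauss_dens (ou_var r) (0::'a) * (norm x + 1 + 2 * ou_var r)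
        + gauss_dens (ou_var r) (0::'a) / ou_var u * norm (y - exp (- u) *\<^sub>R z)))"
proof -
  have su: "ou_var u > 0" and sr: "ou_var r > 0"
    using ou_var_pos u r by simp_all
  have "norm (y - (1 / ou_var u) *\<^sub>R (y - exp (- u) *\<^sub>R z)) \<le> norm y + norm (y - exp (- u) *\<^sub>R z) / ou_var u"
    using norm_triangle_ineq4[of y "(1 / ou_var u) *\<^sub>R (y - exp (- u) *\<^sub>R z)"] su by simp
  from mult_left_mono[OF this ou_kernel_nonneg[of r x y]]
  have "ou_kernel r x y * norm (y - (1 / ou_var u) *\<^sub>R (y - exp (- u) *\<^sub>R z))
      \<le> ou_kernel r x y * norm y + ou_kernel r x y * norm (y - exp (- u) *\<^sub>R z) / ou_var u"
    by (simp add: distrib_left)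
  also have "\<dots> \<le> exp r * gauss_dens (ou_var r) (0::'a) * (norm x + 1 + 2 * ou_var r)
      + gauss_dens (ou_var r) (0::'a) / ou_var u * norm (y - exp (- u) *\<^sub>R z)"
    using ou_kernel_mult_norm_le[OF r, of x y] gauss_dens_le_peak[OF sr, of "x - exp (- r) *\<^sub>R y"] su
    unfolding ou_kernel_def by (intro add_mono) (auto simp: divide_right_mono mult_right_mono)
  finally have bound: "q0 z * (ou_kernel u y z * (ou_kernel r x y * norm (y - (1 / ou_var u) *\<^sub>R (y - exp (- u) *\<^sub>R z))))
      \<le> q0 z * (ou_kernel u y z * (exp r * gauss_dens (ou_var r) (0::'a) * (norm x + 1 + 2 * ou_var r)
        + gauss_dens (ou_var r) (0::'a) / ou_var u * norm (y - exp (- u) *\<^sub>R z)))"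
    by (intro mult_left_mono) (simp_all add: q0_nonneg)
  have "norm (ou_kernel r x y *\<^sub>R score_flux_kernel u y z)
      = q0 z * (ou_kernel u y z * (ou_kernel r x y * norm (y - (1 / ou_var u) *\<^sub>R (y - exp (- u) *\<^sub>R z))))"
    unfolding score_flux_kernel_def using q0_nonneg[of z] by (simp add: abs_mult mult.left_commute)
  also note bound
  finally show ?thesis .
qed

lemma integrable_ou_kernel_scaleR_score_flux_kernel:
  assumes u: "u > 0" and r: "r > 0"
  shows "integrable (lborel \<Otimes>\<^sub>M lborel) (\<lambda>(z, y). ou_kernel r x y *\<^sub>R score_flux_kernel u y z)"
proof (subst integrable_iff_bounded, intro conjI)
  show "(\<lambda>(z, y). ou_kernel r x y *\<^sub>R score_flux_kernel u y z) \<in> borel_measurable (lborel \<Otimes>\<^sub>M lborel)"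
    by measurable
  define B1 where "B1 = exp r * gauss_dens (ou_var r) (0::'a) * (norm x + 1 + 2 * ou_var r)"
  define B2 where "B2 = gauss_dens (ou_var r) (0::'a) / ou_var u"
  define C where "C = (\<integral> w. gauss_dens (ou_var u) w * norm (w::'a) \<partial>lborel)"
  have C: "0 \<le> C"
    unfolding C_def by (intro integral_nonneg_AE AE_I2) simp
  have B: "0 \<le> B1" "0 \<le> B2"
    unfolding B1_def B2_def using ou_var_pos[OF u] ou_var_pos[OF r] by simp_all
  have "(\<integral>\<^sup>+ p. ennreal (norm ((\<lambda>(z, y). ou_kernel r x y *\<^sub>R score_flux_kernel u y z) p)) \<partial>(lborel \<Otimes>\<^sub>M lborel))
      = (\<integral>\<^sup>+ z. (\<integral>\<^sup>+ y. ennreal (norm (ou_kernel r x y *\<^sub>R score_flux_kernel u y z)) \<partial>lborel) \<partial>lborel)"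
    by (subst lborel.nn_integral_fst[symmetric]) auto
  also have "\<dots> \<le> (\<integral>\<^sup>+ z. (\<integral>\<^sup>+ y. ennreal (q0 z * (ou_kernel u y z * (B1 + B2 * norm (y - exp (- u) *\<^sub>R z)))) \<partial>lborel) \<partial>lborel)"
    unfolding B1_def B2_def by (intro nn_integral_mono ennreal_leI norm_ou_kernel_scaleR_score_flux_kernel_le[OF u r])
  also have "\<dots> = (\<integral>\<^sup>+ z. ennreal (q0 z) * (\<integral>\<^sup>+ y. ennreal (ou_kernel u y z * (B1 + B2 * norm (y - exp (- u) *\<^sub>R z))) \<partial>lborel) \<partial>lborel)"
  proof (intro nn_integral_cong)
    fix z
    have "ennreal (q0 z * (ou_kernel u y z * (B1 + B2 * norm (y - exp (- u) *\<^sub>R z))))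
        = ennreal (q0 z) * ennreal (ou_kernel u y z * (B1 + B2 * norm (y - exp (- u) *\<^sub>R z)))" for y
      using q0_nonneg[of z] B by (intro ennreal_mult) auto
    then show "(\<integral>\<^sup>+ y. ennreal (q0 z * (ou_kernel u y z * (B1 + B2 * norm (y - exp (- u) *\<^sub>R z)))) \<partial>lborel)
        = ennreal (q0 z) * (\<integral>\<^sup>+ y. ennreal (ou_kernel u y z * (B1 + B2 * norm (y - exp (- u) *\<^sub>R z))) \<partial>lborel)"
      by (simp add: nn_integral_cmult)
  qed
  also have "\<dots> = (\<integral>\<^sup>+ z. ennreal (q0 z) * ennreal (B1 + B2 * C) \<partial>lborel)"
    unfolding C_def nn_integral_ou_kernel_mult_affine_norm[OF u B(1,2)] ..
  also have "\<dots> = ennreal (B1 + B2 * C)"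
    by (simp add: nn_integral_multc nn_integral_q0)
  finally show "(\<integral>\<^sup>+ p. ennreal (norm ((\<lambda>(z, y). ou_kernel r x y *\<^sub>R score_flux_kernel u y z) p)) \<partial>(lborel \<Otimes>\<^sub>M lborel)) < \<infinity>"
    by (simp add: le_less_trans)
qed

lemma score_flux_semigroup:
  assumes u: "u > 0" and r: "r > 0"
  shows "(\<integral> y. ou_kernel r x y *\<^sub>R score_flux u y \<partial>lborel) = exp r *\<^sub>R score_flux (u + r) x"
proof -
  have "(\<integral> y. ou_kernel r x y *\<^sub>R score_flux u y \<partial>lborel)
      = (\<integral> y. (\<integral> z. ou_kernel r x y *\<^sub>R score_flux_kernel u y z \<partial>lborel) \<partial>lborel)"
    unfolding score_flux_eq_integral[OF u] by simp
  also have "\<dots> = (\<integral> z. (\<integral> y. ou_kernel r x y *\<^sub>R score_flux_kernel u y z \<partial>lborel) \<partial>lborel)"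
    using lborel_pair.Fubini_integral[of "\<lambda>z y. ou_kernel r x y *\<^sub>R score_flux_kernel u y z"]
      integrable_ou_kernel_scaleR_score_flux_kernel[OF u r, of x] by simp
  also have "\<dots> = exp r *\<^sub>R score_flux (u + r) x"
    using score_flux_eq_integral[of "u + r" x] u r by (simp add: integral_ou_kernel_scaleR_score_flux_kernel[OF u r])
  finally show ?thesis .
qed

end

section \<open>Exponential decay of the relative Fisher information\<close>

lemma nn_integral_weighted_Cauchy_Schwarz:
  fixes w p f :: "'b \<Rightarrow> real"
  assumes [measurable]: "w \<in> borel_measurable M" "p \<in> borel_measurable M" "f \<in> borel_measurable M"
    and w: "\<And>y. 0 \<le> w y" and p: "\<And>y. 0 < p y"
  shows "(\<integral>\<^sup>+ y. ennreal (w y * \<bar>f y\<bar>) \<partial>M)\<^sup>2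
    \<le> (\<integral>\<^sup>+ y. ennreal (w y * p y) \<partial>M) * (\<integral>\<^sup>+ y. ennreal (w y * (f y)\<^sup>2 / p y) \<partial>M)"
proof -
  define g h where "g y = ennreal (sqrt (w y * p y))" and "h y = ennreal (sqrt (w y) * \<bar>f y\<bar> / sqrt (p y))" for y
  have "g y * h y = ennreal (w y * \<bar>f y\<bar>)" for y
  proof -
    have "sqrt (w y * p y) * (sqrt (w y) * \<bar>f y\<bar> / sqrt (p y)) = w y * \<bar>f y\<bar>"
      using w[of y] p[of y] by (simp add: real_sqrt_mult field_simps)
    then show ?thesis
      unfolding g_def h_def using w[of y] p[of y] by (simp add: ennreal_mult[symmetric])
  qed
  moreover have "g y ^ 2 = ennreal (w y * p y)" for y
    unfolding g_def using w[of y] p[of y] by (subst ennreal_power) auto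
  moreover have "h y ^ 2 = ennreal (w y * (f y)\<^sup>2 / p y)" for y
    unfolding h_def using w[of y] p[of y] by (subst ennreal_power) (auto simp: power_divide power_mult_distrib)
  moreover have "(\<integral>\<^sup>+ y. g y * h y \<partial>M)\<^sup>2 \<le> (\<integral>\<^sup>+ y. g y ^ 2 \<partial>M) * (\<integral>\<^sup>+ y. h y ^ 2 \<partial>M)"
    by (rule Cauchy_Schwarz_nn_integral) (simp_all add: g_def h_def)
  ultimately show ?thesis
    by simp
qed

context ou_density
begin

definition rel_fisher :: "real \<Rightarrow> ennreal" where
  "rel_fisher u = (\<integral>\<^sup>+ x. ennreal (q u x * (norm (grad (\<lambda>y. ln (q u y)) x + x))\<^sup>2) \<partial>lborel)"

lemma rel_fisher_eq:
  assumes u: "u > 0"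
  shows "rel_fisher u = (\<integral>\<^sup>+ x. ennreal ((norm (score_flux u x))\<^sup>2 / q u x) \<partial>lborel)"
  unfolding rel_fisher_def fisher_integrand_eq[OF u] ..

text \<open>\<open>score_flux (u + r) x\<close> is \<open>e\<^sup>-\<^sup>r\<close> times an average of \<open>score_flux u\<close> against \<open>ou_kernel r x\<close>,
  and the weight \<open>ou_kernel r x\<close> integrates \<open>q u\<close> to \<open>q (u + r) x\<close>; Cauchy--Schwarz does the rest.\<close>

lemma norm_score_flux_sq_le:
  assumes u: "u > 0" and r: "r > 0"
  shows "ennreal ((norm (score_flux (u + r) x))\<^sup>2)
     \<le> ennreal (exp (- 2 * r)) * (ennreal (q (u + r) x)
        * (\<integral>\<^sup>+ y. ennreal (ou_kernel r x y * ((norm (score_flux u y))\<^sup>2 / q u y)) \<partial>lborel))"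
proof -
  define I where "I = (\<integral> y. ou_kernel r x y * norm (score_flux u y) \<partial>lborel)"
  have "norm (score_flux (u + r) x) = exp (- r) * norm (\<integral> y. ou_kernel r x y *\<^sub>R score_flux u y \<partial>lborel)"
    unfolding score_flux_semigroup[OF u r] by (simp add: exp_minus)
  also have "\<dots> \<le> exp (- r) * I"
    unfolding I_def using integral_norm_bound[of lborel "\<lambda>y. ou_kernel r x y *\<^sub>R score_flux u y"] by simp
  finally have "ennreal ((norm (score_flux (u + r) x))\<^sup>2) \<le> ennreal ((exp (- r) * I)\<^sup>2)"
    by (intro ennreal_leI power_mono) auto
  also have "\<dots> = ennreal (exp (- 2 * r)) * (ennreal I)\<^sup>2"
  proof -
    have "(exp (- r) * I)\<^sup>2 = exp (- 2 * r) * I\<^sup>2"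
      by (simp add: power_mult_distrib power2_eq_square mult_exp_exp)
    moreover have "I \<ge> 0"
      unfolding I_def by (intro integral_nonneg_AE AE_I2) simp
    ultimately show ?thesis
      by (simp add: ennreal_mult ennreal_power)
  qed
  also have "(ennreal I)\<^sup>2 \<le> (\<integral>\<^sup>+ y. ennreal (ou_kernel r x y * \<bar>norm (score_flux u y)\<bar>) \<partial>lborel)\<^sup>2"
    unfolding I_def by (intro power_mono) (auto simp: integral_eq_nn_integral ennreal_enn2real_if intro!: AE_I2)
  also have "\<dots> \<le> ennreal (q (u + r) x) * (\<integral>\<^sup>+ y. ennreal (ou_kernel r x y * ((norm (score_flux u y))\<^sup>2 / q u y)) \<partial>lborel)"
    using nn_integral_weighted_Cauchy_Schwarz[of "ou_kernel r x" lborel "q u" "\<lambda>y. norm (score_flux u y)"]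
      nn_integral_ou_dens_mult_ou_kernel[OF u r, of x] ou_dens_pos[OF u]
    by (simp add: mult.commute)
  finally show ?thesis
    by (simp add: mult_left_mono)
qed

lemma score_flux_sq_div_le:
  assumes u: "u > 0" and r: "r > 0"
  shows "ennreal ((norm (score_flux (u + r) x))\<^sup>2 / q (u + r) x)
     \<le> ennreal (exp (- 2 * r)) * (\<integral>\<^sup>+ y. ennreal (ou_kernel r x y * ((norm (score_flux u y))\<^sup>2 / q u y)) \<partial>lborel)"
    (is "_ \<le> ennreal ?e * ?T")
proof -
  have qv: "q (u + r) x > 0"
    using ou_dens_pos u r by simp
  have "ennreal ((norm (score_flux (u + r) x))\<^sup>2 / q (u + r) x)
      = ennreal ((norm (score_flux (u + r) x))\<^sup>2) * ennreal (1 / q (u + r) x)"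
    using qv by (simp add: divide_inverse ennreal_mult)
  also have "\<dots> \<le> ennreal ?e * (ennreal (q (u + r) x) * ?T) * ennreal (1 / q (u + r) x)"
    by (rule mult_right_mono[OF norm_score_flux_sq_le[OF u r]]) simp
  also have "\<dots> = ennreal ?e * ?T * (ennreal (q (u + r) x) * ennreal (1 / q (u + r) x))"
    by (simp only: ac_simps)
  also have "ennreal (q (u + r) x) * ennreal (1 / q (u + r) x) = 1"
    using qv by (simp add: ennreal_mult[symmetric])
  finally show ?thesis
    by simp
qed

lemma rel_fisher_decay:
  assumes u: "u > 0" and r: "r > 0"
  shows "rel_fisher (u + r) \<le> ennreal (exp (- 2 * r)) * rel_fisher u"
proof -
  have split: "ennreal (ou_kernel r x y * ((norm (score_flux u y))\<^sup>2 / q u y))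
      = ennreal (ou_kernel r x y) * ennreal ((norm (score_flux u y))\<^sup>2 / q u y)" for x y
    using ou_dens_pos[OF u, of y] by (intro ennreal_mult) auto
  have "rel_fisher (u + r) \<le> (\<integral>\<^sup>+ x. ennreal (exp (- 2 * r))
      * (\<integral>\<^sup>+ y. ennreal (ou_kernel r x y * ((norm (score_flux u y))\<^sup>2 / q u y)) \<partial>lborel) \<partial>lborel)"
    unfolding rel_fisher_eq[OF add_pos_pos[OF u r]] by (intro nn_integral_mono score_flux_sq_div_le[OF u r])
  also have "\<dots> = ennreal (exp (- 2 * r))
      * (\<integral>\<^sup>+ x. (\<integral>\<^sup>+ y. ennreal (ou_kernel r x y) * ennreal ((norm (score_flux u y))\<^sup>2 / q u y) \<partial>lborel) \<partial>lborel)"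
    unfolding split by (rule nn_integral_cmult) measurable
  also have "\<dots> = ennreal (exp (- 2 * r))
      * (\<integral>\<^sup>+ y. (\<integral>\<^sup>+ x. ennreal (ou_kernel r x y) * ennreal ((norm (score_flux u y))\<^sup>2 / q u y) \<partial>lborel) \<partial>lborel)"
    by (subst lborel_pair.Fubini') measurable
  also have "\<dots> = ennreal (exp (- 2 * r)) * rel_fisher u"
    unfolding rel_fisher_eq[OF u] ou_kernel_def
    by (simp add: nn_integral_multc nn_integral_gauss_dens_translate[OF ou_var_pos[OF r]])
  finally show ?thesis .
qed

end

lemma exp_decay_set_nn_integral_after:
  fixes J :: "real \<Rightarrow> ennreal" and c t T :: real
  assumes decay: "\<And>u r. 0 < u \<Longrightarrow> 0 < r \<Longrightarrow> J (u + r) \<le> ennreal (exp (- c * r)) * J u"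
    and c: "0 < c" and t: "0 < t" and tT: "t \<le> T"
  shows "(\<integral>\<^sup>+ u \<in> {t..T}. J u \<partial>lborel) \<le> J t * ennreal (1 / c)"
proof -
  have after: "J u \<le> J t * ennreal (exp (- c * (u - t)))" if "t \<le> u" for u
    using decay[OF t, of "u - t"] that by (cases "u = t") (auto simp: mult.commute)
  have "(\<integral>\<^sup>+ u \<in> {t..T}. J u \<partial>lborel) \<le> (\<integral>\<^sup>+ u. J t * (ennreal (exp (- c * (u - t))) * indicator {t..T} u) \<partial>lborel)"
  proof (intro nn_integral_mono)
    fix u
    show "J u * indicator {t..T} u \<le> J t * (ennreal (exp (- c * (u - t))) * indicator {t..T} u)"
      using after[of u] by (cases "u \<in> {t..T}") (simp_all add: mult.assoc)
  qed
  also have "\<dots> = J t * ennreal ((1 - exp (- c * (T - t))) / c)"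
  proof -
    have "(\<integral>\<^sup>+ u. ennreal (exp (- c * (u - t))) * indicator {t..T} u \<partial>lborel)
        = ennreal (- exp (- c * (T - t)) / c - - exp (- c * (t - t)) / c)"
      using c tT by (intro nn_integral_FTC_Icc) (auto intro!: derivative_eq_intros)
    then show ?thesis
      by (simp add: nn_integral_cmult diff_divide_distrib)
  qed
  also have "\<dots> \<le> J t * ennreal (1 / c)"
    using c by (intro mult_left_mono ennreal_leI divide_right_mono) auto
  finally show ?thesis .
qed

lemma exp_decay_set_nn_integral_before:
  fixes J :: "real \<Rightarrow> ennreal" and c t :: real
  assumes decay: "\<And>u r. 0 < u \<Longrightarrow> 0 < r \<Longrightarrow> J (u + r) \<le> ennreal (exp (- c * r)) * J u"
    and c: "0 < c" and t: "0 < t"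
  shows "J t * ennreal ((exp (c * t) - 1) / c) \<le> (\<integral>\<^sup>+ u \<in> {0..t}. J u \<partial>lborel)"
proof -
  have before: "J t * ennreal (exp (c * (t - u))) \<le> J u" if "0 < u" "u \<le> t" for u
  proof (cases "u = t")
    case False
    then have "J t \<le> ennreal (exp (- c * (t - u))) * J u"
      using decay[OF that(1), of "t - u"] that by simp
    then have "J t * ennreal (exp (c * (t - u))) \<le> ennreal (exp (c * (t - u)) * exp (- c * (t - u))) * J u"
      by (simp add: ennreal_mult mult.assoc mult.commute[of "J t"] mult_left_mono)
    then show ?thesis
      by (simp add: mult_exp_exp)
  qed simp
  have "J t * ennreal ((exp (c * t) - 1) / c) = (\<integral>\<^sup>+ u. J t * (ennreal (exp (c * (t - u))) * indicator {0..t} u) \<partial>lborel)"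
  proof -
    have "(\<integral>\<^sup>+ u. ennreal (exp (c * (t - u))) * indicator {0..t} u \<partial>lborel)
        = ennreal (- exp (c * (t - t)) / c - - exp (c * (t - 0)) / c)"
      using c t by (intro nn_integral_FTC_Icc) (auto intro!: derivative_eq_intros)
    then show ?thesis
      by (simp add: nn_integral_cmult diff_divide_distrib)
  qed
  also have "\<dots> \<le> (\<integral>\<^sup>+ u \<in> {0..t}. J u \<partial>lborel)"
  proof (intro nn_integral_mono_AE)
    show "AE u in lborel. J t * (ennreal (exp (c * (t - u))) * indicator {0..t} u) \<le> J u * indicator {0..t} u"
      using AE_lborel_singleton[of 0]
    proof eventually_elim
      case (elim u)
      then show ?case
        using before[of u] by (cases "u \<in> {0..t}") (simp_all add: mult.assoc)
    qed
  qed
  finally show ?thesis .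
qed

lemma exp_decay_set_nn_integral_ratio:
  fixes J :: "real \<Rightarrow> ennreal" and c t T :: real
  assumes decay: "\<And>u r. 0 < u \<Longrightarrow> 0 < r \<Longrightarrow> J (u + r) \<le> ennreal (exp (- c * r)) * J u"
    and c: "0 < c" and t: "0 < t" and tT: "t \<le> T"
  shows "(\<integral>\<^sup>+ u \<in> {t..T}. J u \<partial>lborel) \<le> ennreal (exp (- c * t) / (1 - exp (- c * t))) * (\<integral>\<^sup>+ u \<in> {0..t}. J u \<partial>lborel)"
proof -
  have "exp (- c * t) / (1 - exp (- c * t)) * ((exp (c * t) - 1) / c) = 1 / c"
    using c t by (simp add: field_simps exp_minus)
  then have ratio: "J t * ennreal (1 / c)
      = ennreal (exp (- c * t) / (1 - exp (- c * t))) * (J t * ennreal ((exp (c * t) - 1) / c))"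
    using c t by (simp add: ennreal_mult[symmetric] ac_simps)
  have "(\<integral>\<^sup>+ u \<in> {t..T}. J u \<partial>lborel) \<le> J t * ennreal (1 / c)"
    by (rule exp_decay_set_nn_integral_after[OF decay c t tT])
  also have "\<dots> \<le> ennreal (exp (- c * t) / (1 - exp (- c * t))) * (\<integral>\<^sup>+ u \<in> {0..t}. J u \<partial>lborel)"
    unfolding ratio by (rule mult_left_mono[OF exp_decay_set_nn_integral_before[OF decay c t] zero_le])
  finally show ?thesis .
qed

theorem theorem1:
  fixes q0 :: "'a::euclidean_space \<Rightarrow> real" and t T :: real
  assumes "q0 \<in> borel_measurable lborel"
    and "\<And>x. q0 x \<ge> 0"
    and "(\<integral>\<^sup>+ x. ennreal (q0 x) \<partial>lborel) = 1"
    and "KL_finite q0 q_inf"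
    and "0 < t" and "t \<le> T"
  shows "H q0 t T \<le> ennreal (exp (-2 * t) / (1 - exp (-2 * t))) * H q0 0 t"
proof -
  interpret ou_density q0
    using assms(1-3) by unfold_locales auto
  have "H q0 a b = (\<integral>\<^sup>+ u \<in> {a..b}. rel_fisher u \<partial>lborel)" for a b
    unfolding H_def rel_fisher_def ..
  then show ?thesis
    using exp_decay_set_nn_integral_ratio[of rel_fisher 2 t T] rel_fisher_decay assms(5,6) by simp
qed

end
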